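(* Let $R\subseteq S_n$ be a top-$k$ partial ranking with $n-k\ge2$, let $\sigma_0\in R$ be fixed, and let $\sigma$ be uniformly distributed on $R$. Put $X=d(\sigma,\sigma_0)$ and $Y=d(A_R(\sigma),\sigma_0)$. Then $\mathrm{Cov}(X,Y)<0$.
   Context: $S_n$ is the symmetric group on $[n]$; $\sigma\in S_n$ is identified with the full ranking $\sigma(1)\succ\cdots\succ\sigma(n)$. For distinct items $x,y$, $\{x,y\}$ is discordant for $\sigma,\tau$ if $(\sigma^{-1}(x)-\sigma^{-1}(y))(\tau^{-1}(x)-\tau^{-1}(y))<0$. The Kendall distance $d(\sigma,\tau)$ is the number of unordered discordant pairs. For $0\le k\le n$ and distinct $a_1,\dots,a_k\in[n]$, the top-$k$ partial ranking is the set $R=\{\sigma\in S_n:\sigma(i)=a_i,\ i\le k\}$ ($R=S_n$ when $k=0$). The antithetic operator $A_R:R\to R$ is $A_R(\sigma)(i)=a_i$ for $i\le k$ and $A_R(\sigma)(k+j)=\sigma(n+1-j)$ for $j=1,\dots,n-k$. *)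

theory Defs
  imports "HOL-Probability.Probability" "HOL-Combinatorics.Permutations"
begin

text \<open>A permutation sigma of {1..n} is read as the ranking sigma 1 > ... > sigma n;
  inv sigma x is the position of item x.\<close>

definition discordant :: "(nat \<Rightarrow> nat) \<Rightarrow> (nat \<Rightarrow> nat) \<Rightarrow> nat \<Rightarrow> nat \<Rightarrow> bool" where
  "discordant \<sigma> \<tau> x y \<longleftrightarrow>
     (int (inv \<sigma> x) - int (inv \<sigma> y)) * (int (inv \<tau> x) - int (inv \<tau> y)) < 0"

definition kendall :: "nat \<Rightarrow> (nat \<Rightarrow> nat) \<Rightarrow> (nat \<Rightarrow> nat) \<Rightarrow> nat" where
  "kendall n \<sigma> \<tau> = card {p :: nat set. \<exists>x y. p = {x, y} \<and> x \<in> {1..n} \<and> y \<in> {1..n} \<and> x \<noteq> y \<and> discordant \<sigma> \<tau> x y}"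

definition topk :: "nat \<Rightarrow> nat \<Rightarrow> (nat \<Rightarrow> nat) \<Rightarrow> (nat \<Rightarrow> nat) set" where
  "topk n k a = {\<sigma>. \<sigma> permutes {1..n} \<and> (\<forall>i\<in>{1..k}. \<sigma> i = a i)}"

definition antithetic :: "nat \<Rightarrow> nat \<Rightarrow> (nat \<Rightarrow> nat) \<Rightarrow> (nat \<Rightarrow> nat) \<Rightarrow> (nat \<Rightarrow> nat)" where
  "antithetic n k a \<sigma> = (\<lambda>i. if 1 \<le> i \<and> i \<le> k then a i
                             else if k < i \<and> i \<le> n then \<sigma> (n + 1 - (i - k))
                             else i)"

definition covariance :: "'a measure \<Rightarrow> ('a \<Rightarrow> real) \<Rightarrow> ('a \<Rightarrow> real) \<Rightarrow> real" where
  "covariance M X Y = (\<integral>x. (X x - (\<integral>z. X z \<partial>M)) * (Y x - (\<integral>z. Y z \<partial>M)) \<partial>M)"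

end

theory Submission imports Defs begin

text \<open>A pair involving a top item is never discordant for two
  rankings of R, and every pair of bottom items is discordant with \<sigma>0 for exactly one of \<sigma> and
  A \<sigma>. Hence X + Y = (n - k choose 2) is constant on R, so Cov(X, Y) = -Var(X), and X is not
  constant: it vanishes at \<sigma>0 and equals (n - k choose 2) > 0 at A \<sigma>0.\<close>

lemma covariance_uniform_complement_neg:
  fixes R :: "'a set" and f g :: "'a \<Rightarrow> real"
  assumes "finite R" and "s \<in> R" and "t \<in> R" and "f s \<noteq> f t"
    and g: "\<And>r. r \<in> R \<Longrightarrow> g r = c - f r"
  shows "covariance (measure_pmf (pmf_of_set R)) f g < 0"
proof -
  have R: "R \<noteq> {}" "finite R" using assms by auto
  then have N: "real (card R) > 0" by (simp add: card_gt_0_iff)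
  define \<mu> where "\<mu> = sum f R / card R"
  have Ef: "(\<integral>z. f z \<partial>measure_pmf (pmf_of_set R)) = \<mu>"
    unfolding \<mu>_def using R by (rule integral_pmf_of_set)
  have "(\<integral>z. g z \<partial>measure_pmf (pmf_of_set R)) = (\<Sum>r\<in>R. c - f r) / card R"
    using integral_pmf_of_set[OF R] g by (simp cong: sum.cong)
  also have "\<dots> = c - \<mu>"
    using N by (simp add: \<mu>_def sum_subtractf field_simps)
  finally have Eg: "(\<integral>z. g z \<partial>measure_pmf (pmf_of_set R)) = c - \<mu>" .
  have "covariance (measure_pmf (pmf_of_set R)) f g = (\<Sum>r\<in>R. (f r - \<mu>) * (g r - (c - \<mu>))) / card R"
    unfolding covariance_def Ef Eg using R by (rule integral_pmf_of_set)
  also have "\<dots> = - (\<Sum>r\<in>R. (f r - \<mu>)\<^sup>2) / card R"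
    by (simp add: g sum_negf[symmetric] power2_eq_square algebra_simps cong: sum.cong)
  also have "\<dots> < 0"
  proof -
    have "\<not> (\<forall>r\<in>R. (f r - \<mu>)\<^sup>2 = 0)" using assms(2-4) by (metis power_eq_0_iff right_minus_eq)
    then have "(\<Sum>r\<in>R. (f r - \<mu>)\<^sup>2) > 0"
      using R sum_nonneg_eq_0_iff[of R "\<lambda>r. (f r - \<mu>)\<^sup>2"] sum_nonneg[of R "\<lambda>r. (f r - \<mu>)\<^sup>2"]
      by fastforce
    then show ?thesis using N by (simp add: divide_neg_pos)
  qed
  finally show ?thesis .
qed

definition rev_tail :: "nat \<Rightarrow> nat \<Rightarrow> nat \<Rightarrow> nat" where
  "rev_tail n k i = (if k < i \<and> i \<le> n then n + 1 + k - i else i)"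

lemma rev_tail_rev_tail [simp]: "rev_tail n k (rev_tail n k i) = i"
  unfolding rev_tail_def by auto

lemma rev_tail_permutes: "rev_tail n k permutes {1..n}"
  unfolding permutes_def
proof (intro conjI allI impI)
  show "rev_tail n k x = x" if "x \<notin> {1..n}" for x
    using that unfolding rev_tail_def by auto
  show "\<exists>!x. rev_tail n k x = y" for y
    by (rule ex1I[of _ "rev_tail n k y"]) (auto dest: arg_cong[of _ _ "rev_tail n k"])
qed

lemma inv_rev_tail: "inv (rev_tail n k) = rev_tail n k"
  by (rule inv_unique_comp) (auto simp: fun_eq_iff)

lemma topk_permutes: "\<sigma> \<in> topk n k a \<Longrightarrow> \<sigma> permutes {1..n}"
  by (simp add: topk_def)

lemma antithetic_eq_comp_rev_tail:
  assumes "\<sigma> \<in> topk n k a"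
  shows "antithetic n k a \<sigma> = \<sigma> \<circ> rev_tail n k"
proof
  fix i
  have "\<sigma> i = i" if "i \<notin> {1..n}"
    using permutes_not_in[OF topk_permutes[OF assms] that] .
  moreover have "n + 1 - (i - k) = n + 1 + k - i" if "k < i" "i \<le> n"
    using that by simp
  ultimately show "antithetic n k a \<sigma> i = (\<sigma> \<circ> rev_tail n k) i"
    using assms by (auto simp: antithetic_def rev_tail_def topk_def)
qed

lemma antithetic_in_topk:
  assumes "\<sigma> \<in> topk n k a"
  shows "antithetic n k a \<sigma> \<in> topk n k a"
proof -
  have "antithetic n k a \<sigma> permutes {1..n}"
    unfolding antithetic_eq_comp_rev_tail[OF assms]
    by (rule permutes_compose[OF rev_tail_permutes topk_permutes[OF assms]])
  then show ?thesis by (simp add: topk_def antithetic_def)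
qed

lemma inv_antithetic:
  assumes "\<sigma> \<in> topk n k a"
  shows "inv (antithetic n k a \<sigma>) = rev_tail n k \<circ> inv \<sigma>"
  using o_inv_distrib[OF permutes_bij[OF topk_permutes[OF assms]] permutes_bij[OF rev_tail_permutes]]
  by (simp add: antithetic_eq_comp_rev_tail[OF assms] inv_rev_tail)

lemma inv_topk_top_item:
  assumes "\<sigma> \<in> topk n k a" and "i \<in> {1..k}"
  shows "inv \<sigma> (a i) = i"
  using assms permutes_inv_eq[OF topk_permutes[OF assms(1)]] by (simp add: topk_def)

lemma inv_topk_in_range:
  assumes "\<sigma> \<in> topk n k a" and "x \<in> {1..n}"
  shows "inv \<sigma> x \<in> {1..n}"
  using assms permutes_in_image[OF permutes_inv[OF topk_permutes[OF assms(1)]]] by simp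

lemma inv_topk_bottom_item_gt:
  assumes "\<sigma> \<in> topk n k a" and "x \<in> {1..n}" and "x \<notin> a ` {1..k}"
  shows "k < inv \<sigma> x"
proof (rule ccontr)
  assume "\<not> k < inv \<sigma> x"
  then have i: "inv \<sigma> x \<in> {1..k}" using inv_topk_in_range[OF assms(1,2)] by auto
  then have "\<sigma> (inv \<sigma> x) = a (inv \<sigma> x)" using assms(1) by (simp add: topk_def)
  then have "x = a (inv \<sigma> x)" using permutes_inverses(1)[OF topk_permutes[OF assms(1)]] by simp
  then show False using assms(3) i by auto
qed

lemma discordant_sym: "discordant \<sigma> \<tau> x y = discordant \<sigma> \<tau> y x"
  unfolding discordant_def by (smt (verit) mult_minus_left mult_minus_right)

lemma not_discordant_self: "\<not> discordant \<sigma> \<sigma> x y"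
  unfolding discordant_def by (metis not_square_less_zero)

lemma discordant_topk_bottom_item:
  assumes \<sigma>: "\<sigma> \<in> topk n k a" and \<tau>: "\<tau> \<in> topk n k a"
    and "x \<in> {1..n}" and "y \<in> {1..n}" and "discordant \<sigma> \<tau> x y"
  shows "x \<notin> a ` {1..k}"
proof
  assume "x \<in> a ` {1..k}"
  then obtain i where i: "i \<in> {1..k}" "x = a i" by auto
  then have pos_x: "inv \<sigma> x = i" "inv \<tau> x = i"
    using inv_topk_top_item[OF \<sigma>] inv_topk_top_item[OF \<tau>] by auto
  show False
  proof (cases "y \<in> a ` {1..k}")
    case True
    then obtain j where "j \<in> {1..k}" "y = a j" by auto
    then have "inv \<sigma> y = inv \<tau> y"
      using inv_topk_top_item[OF \<sigma>] inv_topk_top_item[OF \<tau>] by simp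
    then show False
      using assms(5) pos_x not_discordant_self unfolding discordant_def by metis
  next
    case False
    then have "int i - int (inv \<sigma> y) < 0" "int i - int (inv \<tau> y) < 0"
      using i inv_topk_bottom_item_gt[OF \<sigma> assms(4)] inv_topk_bottom_item_gt[OF \<tau> assms(4)] by auto
    then show False
      using assms(5) pos_x mult_neg_neg unfolding discordant_def by fastforce
  qed
qed

text \<open>Reversing the bottom positions negates the position difference of two bottom items.\<close>
lemma discordant_antithetic_iff:
  assumes \<sigma>: "\<sigma> \<in> topk n k a" and \<tau>: "\<tau> \<in> topk n k a"
    and x: "x \<in> {1..n} - a ` {1..k}" and y: "y \<in> {1..n} - a ` {1..k}" and "x \<noteq> y"
  shows "discordant (antithetic n k a \<sigma>) \<tau> x y \<longleftrightarrow> \<not> discordant \<sigma> \<tau> x y"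
proof -
  define u v where "u = inv \<sigma> x" and "v = inv \<sigma> y"
  have uv: "k < u" "u \<le> n" "k < v" "v \<le> n"
    using x y inv_topk_bottom_item_gt[OF \<sigma>] inv_topk_in_range[OF \<sigma>] by (auto simp: u_def v_def)
  have "u \<noteq> v" "inv \<tau> x \<noteq> inv \<tau> y"
    using \<open>x \<noteq> y\<close> permutes_inverses(1)[OF topk_permutes[OF \<sigma>]]
      permutes_inverses(1)[OF topk_permutes[OF \<tau>]] unfolding u_def v_def by metis+
  then have nonzero: "(int u - int v) * (int (inv \<tau> x) - int (inv \<tau> y)) \<noteq> 0" by simp
  have "inv (antithetic n k a \<sigma>) x = n + 1 + k - u" "inv (antithetic n k a \<sigma>) y = n + 1 + k - v"
    using uv by (auto simp: inv_antithetic[OF \<sigma>] rev_tail_def u_def v_def)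
  moreover have "int (n + 1 + k - u) - int (n + 1 + k - v) = - (int u - int v)"
    using uv by simp
  ultimately show ?thesis
    using nonzero unfolding discordant_def u_def v_def by (smt (verit) mult_minus_left)
qed

definition discordant_pairs :: "nat \<Rightarrow> (nat \<Rightarrow> nat) \<Rightarrow> (nat \<Rightarrow> nat) \<Rightarrow> nat set set" where
  "discordant_pairs n \<sigma> \<tau> =
     {p. \<exists>x y. p = {x, y} \<and> x \<in> {1..n} \<and> y \<in> {1..n} \<and> x \<noteq> y \<and> discordant \<sigma> \<tau> x y}"

lemma kendall_eq_card_discordant_pairs: "kendall n \<sigma> \<tau> = card (discordant_pairs n \<sigma> \<tau>)"
  by (simp add: kendall_def discordant_pairs_def)

lemma doubleton_in_discordant_pairs_iff:
  "{x, y} \<in> discordant_pairs n \<sigma> \<tau> \<longleftrightarrow> x \<noteq> y \<and> x \<in> {1..n} \<and> y \<in> {1..n} \<and> discordant \<sigma> \<tau> x y"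
  unfolding discordant_pairs_def by (auto simp: doubleton_eq_iff discordant_sym)

lemma discordant_pairs_topk_subset:
  assumes "\<sigma> \<in> topk n k a" and "\<tau> \<in> topk n k a"
  shows "discordant_pairs n \<sigma> \<tau> \<subseteq> {p. p \<subseteq> {1..n} - a ` {1..k} \<and> card p = 2}"
  using discordant_topk_bottom_item[OF assms] discordant_sym
  unfolding discordant_pairs_def by fastforce

lemma discordant_pairs_antithetic:
  assumes \<sigma>: "\<sigma> \<in> topk n k a" and \<tau>: "\<tau> \<in> topk n k a"
  shows "discordant_pairs n (antithetic n k a \<sigma>) \<tau>
           = {p. p \<subseteq> {1..n} - a ` {1..k} \<and> card p = 2} - discordant_pairs n \<sigma> \<tau>"
    (is "?D = ?Q - _")
proof (intro equalityI subsetI)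
  fix p assume p: "p \<in> ?D"
  then have "p \<in> ?Q" using discordant_pairs_topk_subset[OF antithetic_in_topk[OF \<sigma>] \<tau>] by blast
  moreover from this obtain x y where "p = {x, y}" "x \<noteq> y" by (auto simp: card_2_iff)
  ultimately show "p \<in> ?Q - discordant_pairs n \<sigma> \<tau>"
    using p discordant_antithetic_iff[OF \<sigma> \<tau>] by (auto simp: doubleton_in_discordant_pairs_iff)
next
  fix p assume p: "p \<in> ?Q - discordant_pairs n \<sigma> \<tau>"
  then obtain x y where "p = {x, y}" "x \<noteq> y" by (auto simp: card_2_iff)
  then show "p \<in> ?D"
    using p discordant_antithetic_iff[OF \<sigma> \<tau>] by (auto simp: doubleton_in_discordant_pairs_iff)
qed

lemma kendall_add_kendall_antithetic:
  assumes "inj_on a {1..k}" and "a ` {1..k} \<subseteq> {1..n}"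
    and \<sigma>: "\<sigma> \<in> topk n k a" and \<tau>: "\<tau> \<in> topk n k a"
  shows "kendall n \<sigma> \<tau> + kendall n (antithetic n k a \<sigma>) \<tau> = (n - k) choose 2"
proof -
  let ?B = "{1..n} - a ` {1..k}"
  have "card ?B = n - k"
    using card_Diff_subset[OF finite_imageI assms(2)] card_image[OF assms(1)] by simp
  then have "card {p. p \<subseteq> ?B \<and> card p = 2} = (n - k) choose 2"
    by (simp add: n_subsets)
  moreover have "finite {p. p \<subseteq> ?B \<and> card p = 2}" by simp
  ultimately show ?thesis
    using discordant_pairs_topk_subset[OF \<sigma> \<tau>] card_Diff_subset[of "discordant_pairs n \<sigma> \<tau>"]
      card_mono[of "{p. p \<subseteq> ?B \<and> card p = 2}" "discordant_pairs n \<sigma> \<tau>"]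
    by (simp add: kendall_eq_card_discordant_pairs discordant_pairs_antithetic[OF \<sigma> \<tau>]
        finite_subset)
qed

theorem proposition2:
  fixes n k :: nat and a :: "nat \<Rightarrow> nat" and \<sigma>\<^sub>0 :: "nat \<Rightarrow> nat"
  assumes "k \<le> n" and "n - k \<ge> 2"
    and "inj_on a {1..k}" and "a ` {1..k} \<subseteq> {1..n}"
    and "\<sigma>\<^sub>0 \<in> topk n k a"
  shows "covariance (measure_pmf (pmf_of_set (topk n k a)))
           (\<lambda>\<sigma>. real (kendall n \<sigma> \<sigma>\<^sub>0))
           (\<lambda>\<sigma>. real (kendall n (antithetic n k a \<sigma>) \<sigma>\<^sub>0)) < 0"
proof -
  have sum_const: "kendall n \<sigma> \<sigma>\<^sub>0 + kendall n (antithetic n k a \<sigma>) \<sigma>\<^sub>0 = (n - k) choose 2"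
    if "\<sigma> \<in> topk n k a" for \<sigma>
    using kendall_add_kendall_antithetic[OF assms(3,4) that assms(5)] .
  have "finite (topk n k a)"
    by (rule finite_subset[of _ "{p. p permutes {1..n}}"]) (auto simp: topk_def finite_permutations)
  moreover have "real (kendall n \<sigma>\<^sub>0 \<sigma>\<^sub>0) \<noteq> real (kendall n (antithetic n k a \<sigma>\<^sub>0) \<sigma>\<^sub>0)"
    using sum_const[OF assms(5)] assms(2) by (simp add: kendall_def not_discordant_self)
  ultimately show ?thesis
  proof (rule covariance_uniform_complement_neg[OF _ assms(5) antithetic_in_topk[OF assms(5)]])
    show "real (kendall n (antithetic n k a \<sigma>) \<sigma>\<^sub>0) = real ((n - k) choose 2) - real (kendall n \<sigma> \<sigma>\<^sub>0)"
      if "\<sigma> \<in> topk n k a" for \<sigma>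
      using sum_const[OF that] by linarith
  qed
qed

end
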